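(* Let $L=\langle S,A,\to\rangle$ be a labelled transition system. If Duplicator wins a configuration $\langle (s,t),\dagger,\dagger,*\rangle_S$ in the $\emptyset$-generic bisimulation game on $L$, she has an eager winning strategy from this configuration.
   Context: An LTS is $\langle S,A,\to\rangle$ with states $S$, actions $A$ containing the internal action $\tau$, and $\to\subseteq S\times A\times S$; write $s\xrightarrow{a}t$. $\emptyset$-generic bisimulation game: with formal tags $\frown,\smile$, Spoiler-owned configurations $\langle (s,t),c,m,r\rangle_S$ and Duplicator-owned $\langle (s,t),c,m,r\rangle_D$ with $(s,t)\in S\times S$, $c\in (A\times S)\cup\{\dagger\}$, $m\in (S\times\{\frown,\smile\})\cup\{\dagger\}$, $r\in\{*,\checkmark\}$. Spoiler from $\langle (s,t),c,m,r\rangle_S$ may: (S1) move to $\langle (s,t),c,m,*\rangle_D$ if $c\neq\dagger$; (S2a) for some $s\xrightarrow{a}s'$, move to $\langle (s,t),(a,s'),(t,\frown),*\rangle_D$ if $c=\dagger$; (S2b) for some $s\xrightarrow{a}s'$, move to $\langle (s,t),(a,s'),(t,\frown),\checkmark\rangle_D$ if $c\neq (a,s')$; (S3) for some $t\xrightarrow{a}t'$, move to $\langle (t,s),(a,t'),(s,\frown),\checkmark\rangle_D$. Duplicator from $\langle (u,v),(a,u'),(\bar v,f),r\rangle_D$ may: (D1) move to $\langle (u',\bar v),\dagger,\dagger,\checkmark\rangle_S$ if $a=\tau$; (D2) if $f=\frown$ and $\bar v\xrightarrow{a}v'$: (a) move to $\langle (u',v'),(a,u'),(v',\smile),*\rangle_S$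 or (b) move to $\langle (u',v'),\dagger,\dagger,\checkmark\rangle_S$; (D3) for some $\bar v\xrightarrow{\tau}v'$: (a) move to $\langle (u,v'),(a,u'),(v',f),*\rangle_S$, or (b) only if $f=\smile$, move to $\langle (u',v'),\dagger,\dagger,\checkmark\rangle_S$. Duplicator wins a finite play if Spoiler gets stuck, and an infinite play if it has infinitely many $\checkmark$ rewards; other plays are won by Spoiler. A strategy of Duplicator is winning from a configuration if all plays from it consistent with the strategy are won by her. A strategy of Duplicator is eager if it never uses move (D2)(a). *)

theory Defs
  imports Main "HOL-Library.Infinite_Set"
begin

text \<open>An LTS over states 's and actions 'a is given by a transition predicate
  step s a s' (meaning s --a--> s'), together with a distinguished internal action tau.\<close>

datatype player = Spoiler | Duplicator
datatype tag = Frown | Smile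
datatype reward = Star | Check

text \<open>Configurations. None encodes the dagger symbol.\<close>
datatype ('s, 'a) conf =
  Conf player "'s \<times> 's" "('a \<times> 's) option" "('s \<times> tag) option" reward

fun owner :: "('s, 'a) conf \<Rightarrow> player" where
  "owner (Conf p _ _ _ _) = p"

fun rew :: "('s, 'a) conf \<Rightarrow> reward" where
  "rew (Conf _ _ _ _ r) = r"

definition d2a_move :: "('s \<Rightarrow> 'a \<Rightarrow> 's \<Rightarrow> bool) \<Rightarrow> ('s, 'a) conf \<Rightarrow> ('s, 'a) conf \<Rightarrow> bool" where
  "d2a_move step c c' \<longleftrightarrow> (\<exists>u v a u' vb r v'.
      c = Conf Duplicator (u, v) (Some (a, u')) (Some (vb, Frown)) r \<and> step vb a v' \<and>
      c' = Conf Spoiler (u', v') (Some (a, u')) (Some (v', Smile)) Star)"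

inductive gmove :: "'a \<Rightarrow> ('s \<Rightarrow> 'a \<Rightarrow> 's \<Rightarrow> bool) \<Rightarrow> ('s, 'a) conf \<Rightarrow> ('s, 'a) conf \<Rightarrow> bool"
  for tau :: 'a and step :: "'s \<Rightarrow> 'a \<Rightarrow> 's \<Rightarrow> bool" where
  S1: "c \<noteq> None \<Longrightarrow> gmove tau step (Conf Spoiler p c m r) (Conf Duplicator p c m Star)"
| S2a: "step s a s' \<Longrightarrow>
     gmove tau step (Conf Spoiler (s, t) None m r)
       (Conf Duplicator (s, t) (Some (a, s')) (Some (t, Frown)) Star)"
| S2b: "step s a s' \<Longrightarrow> c \<noteq> Some (a, s') \<Longrightarrow>
     gmove tau step (Conf Spoiler (s, t) c m r)
       (Conf Duplicator (s, t) (Some (a, s')) (Some (t, Frown)) Check)"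
| S3: "step t a t' \<Longrightarrow>
     gmove tau step (Conf Spoiler (s, t) c m r)
       (Conf Duplicator (t, s) (Some (a, t')) (Some (s, Frown)) Check)"
| D1: "a = tau \<Longrightarrow>
     gmove tau step (Conf Duplicator (u, v) (Some (a, u')) (Some (vb, f)) r)
       (Conf Spoiler (u', vb) None None Check)"
| D2a: "f = Frown \<Longrightarrow> step vb a v' \<Longrightarrow>
     gmove tau step (Conf Duplicator (u, v) (Some (a, u')) (Some (vb, f)) r)
       (Conf Spoiler (u', v') (Some (a, u')) (Some (v', Smile)) Star)"
| D2b: "f = Frown \<Longrightarrow> step vb a v' \<Longrightarrow>
     gmove tau step (Conf Duplicator (u, v) (Some (a, u')) (Some (vb, f)) r)
       (Conf Spoiler (u', v') None None Check)"
| D3a: "step vb tau v' \<Longrightarrow>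
     gmove tau step (Conf Duplicator (u, v) (Some (a, u')) (Some (vb, f)) r)
       (Conf Spoiler (u, v') (Some (a, u')) (Some (v', f)) Star)"
| D3b: "f = Smile \<Longrightarrow> step vb tau v' \<Longrightarrow>
     gmove tau step (Conf Duplicator (u, v) (Some (a, u')) (Some (vb, f)) r)
       (Conf Spoiler (u', v') None None Check)"

text \<open>Duplicator strategies are history dependent: they map a nonempty finite play prefix
  (ending in a Duplicator configuration) to the next configuration.\<close>
type_synonym ('s, 'a) strategy = "('s, 'a) conf list \<Rightarrow> ('s, 'a) conf"

definition legal_strategy :: "'a \<Rightarrow> ('s \<Rightarrow> 'a \<Rightarrow> 's \<Rightarrow> bool) \<Rightarrow> ('s, 'a) strategy \<Rightarrow> bool" where
  "legal_strategy tau step \<sigma> \<longleftrightarrow> (\<forall>h. h \<noteq> [] \<and> owner (last h) = Duplicator \<and>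
       (\<exists>c'. gmove tau step (last h) c') \<longrightarrow> gmove tau step (last h) (\<sigma> h))"

definition fin_play :: "'a \<Rightarrow> ('s \<Rightarrow> 'a \<Rightarrow> 's \<Rightarrow> bool) \<Rightarrow> ('s, 'a) strategy \<Rightarrow> ('s, 'a) conf
    \<Rightarrow> ('s, 'a) conf list \<Rightarrow> bool" where
  "fin_play tau step \<sigma> c0 p \<longleftrightarrow> p \<noteq> [] \<and> hd p = c0 \<and>
     (\<forall>i. Suc i < length p \<longrightarrow> gmove tau step (p ! i) (p ! Suc i) \<and>
        (owner (p ! i) = Duplicator \<longrightarrow> p ! Suc i = \<sigma> (take (Suc i) p))) \<and>
     \<not> (\<exists>c'. gmove tau step (last p) c')"

definition inf_play :: "'a \<Rightarrow> ('s \<Rightarrow> 'a \<Rightarrow> 's \<Rightarrow> bool) \<Rightarrow> ('s, 'a) strategy \<Rightarrow> ('s, 'a) conf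
    \<Rightarrow> (nat \<Rightarrow> ('s, 'a) conf) \<Rightarrow> bool" where
  "inf_play tau step \<sigma> c0 \<rho> \<longleftrightarrow> \<rho> 0 = c0 \<and>
     (\<forall>i. gmove tau step (\<rho> i) (\<rho> (Suc i)) \<and>
        (owner (\<rho> i) = Duplicator \<longrightarrow> \<rho> (Suc i) = \<sigma> (map \<rho> [0..<Suc i])))"

text \<open>Duplicator wins a finite play iff Spoiler is stuck at its end, and an infinite play iff
  it has infinitely many Check rewards.\<close>
definition winning_strategy :: "'a \<Rightarrow> ('s \<Rightarrow> 'a \<Rightarrow> 's \<Rightarrow> bool) \<Rightarrow> ('s, 'a) strategy
    \<Rightarrow> ('s, 'a) conf \<Rightarrow> bool" where
  "winning_strategy tau step \<sigma> c0 \<longleftrightarrow> legal_strategy tau step \<sigma> \<and>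
     (\<forall>p. fin_play tau step \<sigma> c0 p \<longrightarrow> owner (last p) = Spoiler) \<and>
     (\<forall>\<rho>. inf_play tau step \<sigma> c0 \<rho> \<longrightarrow> (\<exists>\<^sub>\<infinity>i. rew (\<rho> i) = Check))"

definition dup_wins :: "'a \<Rightarrow> ('s \<Rightarrow> 'a \<Rightarrow> 's \<Rightarrow> bool) \<Rightarrow> ('s, 'a) conf \<Rightarrow> bool" where
  "dup_wins tau step c0 \<longleftrightarrow> (\<exists>\<sigma>. winning_strategy tau step \<sigma> c0)"

definition eager :: "('s \<Rightarrow> 'a \<Rightarrow> 's \<Rightarrow> bool) \<Rightarrow> ('s, 'a) strategy \<Rightarrow> bool" where
  "eager step \<sigma> \<longleftrightarrow> (\<forall>h. h \<noteq> [] \<longrightarrow> \<not> d2a_move step (last h) (\<sigma> h))"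

end

theory Submission
  imports Defs
begin

text \<open>Duplicator plays eagerly while running, in parallel, a shadow play that follows the given
  winning strategy \<sigma>. Where \<sigma> answers with (D2)(a), she answers with (D2)(b): both reach the
  same pair of states, but the shadow still holds the challenge with tag \<smile>. Spoiler's moves are
  mirrored in the shadow and \<sigma>'s answers are translated back, so the two current configurations
  always agree up to rewards or up to such a held challenge. The shadow can only get ahead with a
  reward when the held challenge is a self-loop u \<midarrow>a\<rightarrow> u: Spoiler re-issues it, the shadow closes
  it with (D3)(b), and the eager play has to answer with (D3)(a). This lag can be paid only once
  between two rewards of the eager play, so infinitely many rewards in the shadow force infinitely
  many in the eager play. Duplicator is never stuck in the shadow, hence neither in the eager play.\<close>

lemma infinitely_often_transfer:
  fixes P Q A B :: "nat \<Rightarrow> bool"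
  assumes "\<exists>\<^sub>\<infinity>i. Q i"
    and Q_Suc: "\<And>j. Q (Suc j) \<Longrightarrow> P (Suc j) \<or> P j \<or> A j \<and> B (Suc j)"
    and A_Suc: "\<And>j. A (Suc j) \<Longrightarrow> A j \<or> P j"
    and disjoint: "\<And>j. \<not> (A j \<and> B j)"
  shows "\<exists>\<^sub>\<infinity>i. P i"
proof (rule ccontr)
  assume "\<not> (\<exists>\<^sub>\<infinity>i. P i)"
  then obtain N where not_P: "\<And>k. N < k \<Longrightarrow> \<not> P k"
    unfolding INFM_nat by blast
  have Q_after: "\<exists>j>m. Q (Suc j)" for m
  proof -
    obtain i where "Suc m < i" and "Q i" using assms(1) unfolding INFM_nat by blast
    then show ?thesis by (cases i) auto
  qed
  obtain j1 where "N < j1" and "Q (Suc j1)"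
    using Q_after by blast
  then have B: "B (Suc j1)"
    using Q_Suc not_P by (meson less_SucI)
  obtain j2 where "Suc j1 \<le> j2" and "Q (Suc j2)"
    using Q_after by (meson Suc_leI)
  then have "A j2"
    using Q_Suc not_P \<open>N < j1\<close> by (meson less_SucI less_le_trans)
  with \<open>Suc j1 \<le> j2\<close> have "A (Suc j1)"
  proof (induction rule: inc_induct)
    case (step n)
    then have "A (Suc n)" and "N < n" using \<open>N < j1\<close> by auto
    then show ?case using A_Suc not_P by blast
  qed
  with B disjoint show False by blast
qed

text \<open>Stated apart so that it still applies when \<open>upt_Suc\<close> is removed from the simpset.\<close>

lemma last_map_upt_Suc [simp]: "last (map f [0..<Suc n]) = f n"
  by simp

definition consistent_upto ::
    "'a \<Rightarrow> ('s \<Rightarrow> 'a \<Rightarrow> 's \<Rightarrow> bool) \<Rightarrow> ('s, 'a) strategy \<Rightarrow> (nat \<Rightarrow> ('s, 'a) conf) \<Rightarrow> nat \<Rightarrow> bool" where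
  "consistent_upto tau step \<sigma> f n \<longleftrightarrow> (\<forall>i<n. gmove tau step (f i) (f (Suc i)) \<and>
     (owner (f i) = Duplicator \<longrightarrow> f (Suc i) = \<sigma> (map f [0..<Suc i])))"

lemma consistent_upto_Suc:
  "consistent_upto tau step \<sigma> f (Suc n) \<longleftrightarrow> consistent_upto tau step \<sigma> f n \<and>
     gmove tau step (f n) (f (Suc n)) \<and> (owner (f n) = Duplicator \<longrightarrow> f (Suc n) = \<sigma> (map f [0..<Suc n]))"
  unfolding consistent_upto_def by (auto simp: less_Suc_eq simp del: upt_Suc)

lemma consistent_upto_mono: "consistent_upto tau step \<sigma> f n \<Longrightarrow> m \<le> n \<Longrightarrow> consistent_upto tau step \<sigma> f m"
  unfolding consistent_upto_def by (meson less_le_trans)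

lemma fin_play_iff_consistent_upto:
  "fin_play tau step \<sigma> (f 0) (map f [0..<Suc n]) \<longleftrightarrow>
   consistent_upto tau step \<sigma> f n \<and> (\<nexists>c. gmove tau step (f n) c)"
  unfolding fin_play_def consistent_upto_def
  by (auto simp: take_map hd_map simp del: upt_Suc)

lemma inf_play_iff_consistent_upto:
  "inf_play tau step \<sigma> c0 \<rho> \<longleftrightarrow> \<rho> 0 = c0 \<and> (\<forall>n. consistent_upto tau step \<sigma> \<rho> n)"
  unfolding inf_play_def consistent_upto_def by blast

lemma winning_strategy_not_stuck:
  assumes "winning_strategy tau step \<sigma> (f 0)" and "consistent_upto tau step \<sigma> f n"
    and "owner (f n) = Duplicator"
  shows "\<exists>c. gmove tau step (f n) c"
proof (rule ccontr)
  assume "\<nexists>c. gmove tau step (f n) c"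
  with assms(2) have "fin_play tau step \<sigma> (f 0) (map f [0..<Suc n])"
    by (simp add: fin_play_iff_consistent_upto del: upt_Suc)
  with assms(1) have "owner (last (map f [0..<Suc n])) = Spoiler"
    unfolding winning_strategy_def by blast
  with assms(3) show False by simp
qed

definition eager_move :: "'a \<Rightarrow> ('s \<Rightarrow> 'a \<Rightarrow> 's \<Rightarrow> bool) \<Rightarrow> ('s, 'a) conf \<Rightarrow> ('s, 'a) conf \<Rightarrow> bool" where
  "eager_move tau step c e \<longleftrightarrow> gmove tau step c e \<and> \<not> d2a_move step c e"

lemma exists_eager_move:
  assumes "gmove tau step c d"
  shows "\<exists>e. eager_move tau step c e"
proof (cases "d2a_move step c d")
  case True
  then obtain u v a u' vb r v' where
    "c = Conf Duplicator (u, v) (Some (a, u')) (Some (vb, Frown)) r" and "step vb a v'"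
    unfolding d2a_move_def by blast
  then have "eager_move tau step c (Conf Spoiler (u', v') None None Check)"
    by (simp add: eager_move_def d2a_move_def gmove.D2b)
  then show ?thesis ..
next
  case False
  then show ?thesis using assms unfolding eager_move_def by blast
qed

lemma no_d2a_move_refl: "\<not> d2a_move step c c"
  by (cases c) (simp add: d2a_move_def)

fun conf_pair :: "('s, 'a) conf \<Rightarrow> 's \<times> 's" where
  "conf_pair (Conf _ p _ _ _) = p"

fun conf_challenge :: "('s, 'a) conf \<Rightarrow> ('a \<times> 's) option" where
  "conf_challenge (Conf _ _ c _ _) = c"

fun conf_mark :: "('s, 'a) conf \<Rightarrow> ('s \<times> tag) option" where
  "conf_mark (Conf _ _ _ m _) = m"

fun with_reward :: "reward \<Rightarrow> ('s, 'a) conf \<Rightarrow> ('s, 'a) conf" where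
  "with_reward r (Conf pl p c m _) = Conf pl p c m r"

inductive frown_behind :: "('s \<Rightarrow> 'a \<Rightarrow> 's \<Rightarrow> bool) \<Rightarrow> ('s, 'a) conf \<Rightarrow> ('s, 'a) conf \<Rightarrow> bool"
  for step where
  "step u a u \<Longrightarrow> frown_behind step (Conf pl (u, v) (Some (a, u)) (Some (v, Frown)) r')
     (Conf pl (u, v) (Some (a, u)) (Some (v, Smile)) r)"

inductive challenge_behind :: "('s \<Rightarrow> 'a \<Rightarrow> 's \<Rightarrow> bool) \<Rightarrow> ('s, 'a) conf \<Rightarrow> ('s, 'a) conf \<Rightarrow> bool"
  for step where
  "step u a u \<Longrightarrow> challenge_behind step (Conf Spoiler (u, v) (Some (a, u)) (Some (v, Frown)) r')
     (Conf Spoiler (u, v) None None Check)"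

text \<open>In \<open>d2b_for_d2a\<close> the shadow took (D2)(a)
  where the eager play took (D2)(b); the two lag relations arise when Spoiler then re-issues the
  held challenge, which is possible only for a self-loop.\<close>

inductive shadows :: "('s \<Rightarrow> 'a \<Rightarrow> 's \<Rightarrow> bool) \<Rightarrow> ('s, 'a) conf \<Rightarrow> ('s, 'a) conf \<Rightarrow> bool"
  for step where
  reward_variant: "shadows step (Conf pl p c m r') (Conf pl p c m r)"
| d2b_for_d2a: "shadows step (Conf Spoiler (x, y) None None Check)
     (Conf Spoiler (x, y) (Some (a, x)) (Some (y, Smile)) Star)"
| frown_behind: "frown_behind step c' c \<Longrightarrow> shadows step c' c"
| challenge_behind: "challenge_behind step c' c \<Longrightarrow> shadows step c' c"

text \<open>Spoiler's move from \<open>c'\<close> to \<open>n'\<close> mirrored from the shadow \<open>c\<close>: re-issuing the challenge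
  the shadow holds with tag \<smile> becomes (S1), and a challenge from a \<dagger>-configuration becomes
  (S2)(b) if the shadow still holds one.\<close>

definition spoiler_shadow :: "('s, 'a) conf \<Rightarrow> ('s, 'a) conf \<Rightarrow> ('s, 'a) conf \<Rightarrow> ('s, 'a) conf" where
  "spoiler_shadow c' c n' =
    (if \<exists>v. conf_mark c = Some (v, Smile) \<and> conf_mark c' \<noteq> conf_mark c \<and> owner n' = Duplicator \<and>
         conf_pair n' = conf_pair c \<and> conf_challenge n' = conf_challenge c \<and> conf_mark n' = Some (v, Frown)
     then Conf Duplicator (conf_pair c) (conf_challenge c) (conf_mark c) Star
     else if conf_challenge c' = None \<and> conf_challenge c \<noteq> None then with_reward Check n'
     else n')"

lemma shadows_refl: "shadows step c c"
  by (cases c) (simp add: shadows.reward_variant)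

lemma shadows_owner: "shadows step c' c \<Longrightarrow> owner c' = owner c"
  by (auto elim!: shadows.cases frown_behind.cases challenge_behind.cases)

lemma not_frown_and_challenge_behind: "\<not> (frown_behind step c' c \<and> challenge_behind step c' c)"
  by (auto elim: frown_behind.cases challenge_behind.cases)

inductive_cases spoiler_moveE: "gmove tau step (Conf Spoiler p c m r) n'"
inductive_cases duplicator_moveE: "gmove tau step (Conf Duplicator p c m r) n'"

lemma shadow_spoiler_move:
  assumes "shadows step c' c" and "owner c' = Spoiler" and "gmove tau step c' n'"
  defines "e \<equiv> spoiler_shadow c' c n'"
  shows "gmove tau step c e \<and> shadows step n' e \<and>
    (rew e = Check \<longrightarrow> rew n' = Check \<or> rew c' = Check) \<and>
    (frown_behind step n' e \<longrightarrow> frown_behind step c' c \<or> rew c' = Check)"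
  using assms(1)
proof cases
  case reward_variant
  then show ?thesis using assms(2,3) unfolding e_def
    by (auto elim!: spoiler_moveE simp: spoiler_shadow_def frown_behind.simps
        intro: gmove.intros shadows.intros)
next
  case (d2b_for_d2a x y a)
  \<comment> \<open>without splitting off the case where (S3) swaps two equal states, auto does not terminate\<close>
  then show ?thesis using assms(2,3) unfolding e_def
    by (cases "x = y")
      (auto elim!: spoiler_moveE simp: spoiler_shadow_def frown_behind.simps
        intro: gmove.intros shadows.intros)
next
  case frown_behind
  then show ?thesis
  proof cases
    case (1 u a pl v r' r)
    then show ?thesis using assms(2,3) unfolding e_def
      by (cases "u = v")
        (auto elim!: spoiler_moveE simp: spoiler_shadow_def frown_behind.simps
          intro: gmove.intros shadows.intros)
  qed
next
  case challenge_behind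
  then show ?thesis
  proof cases
    case (1 u a v r')
    then show ?thesis using assms(2,3) unfolding e_def
      by (cases "u = v")
        (auto elim!: spoiler_moveE simp: spoiler_shadow_def frown_behind.simps
          intro: gmove.intros shadows.intros)
  qed
qed

text \<open>The shadow's answer \<open>d\<close> played in the eager configuration \<open>c'\<close>: (D2)(a) becomes (D2)(b), and
  while the eager play lags with tag \<frown> every answer other than a (D1) back to the same pair is
  played as (D3)(a).\<close>

definition duplicator_translate ::
    "'a \<Rightarrow> ('s \<Rightarrow> 'a \<Rightarrow> 's \<Rightarrow> bool) \<Rightarrow> ('s, 'a) conf \<Rightarrow> ('s, 'a) conf \<Rightarrow> ('s, 'a) conf \<Rightarrow> ('s, 'a) conf" where
  "duplicator_translate tau step c' c d =
    (if d2a_move step c d then Conf Spoiler (conf_pair d) None None Check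
     else if conf_mark c' \<noteq> conf_mark c then
       (if conf_challenge d = None \<and> (\<exists>u. conf_challenge c = Some (tau, u)) \<and> conf_pair d = conf_pair c
        then d
        else Conf Spoiler (conf_pair d) (conf_challenge c) (Some (snd (conf_pair d), Frown)) Star)
     else d)"

lemma shadow_duplicator_move:
  assumes "shadows step c' c" and "owner c = Duplicator" and "gmove tau step c d"
  defines "e \<equiv> duplicator_translate tau step c' c d"
  shows "gmove tau step c' e \<and> \<not> d2a_move step c' e \<and> shadows step e d \<and>
    (rew d = Check \<longrightarrow> rew e = Check \<or> rew c' = Check \<or>
       frown_behind step c' c \<and> challenge_behind step e d) \<and>
    (frown_behind step e d \<longrightarrow> frown_behind step c' c \<or> rew c' = Check)"
  using assms(1)
proof cases
  case reward_variant
  then show ?thesis using assms(2,3) unfolding e_def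
    by (auto elim!: duplicator_moveE simp: duplicator_translate_def d2a_move_def frown_behind.simps
        intro: gmove.intros shadows.intros)
next
  case d2b_for_d2a
  then show ?thesis using assms(2) by simp
next
  case frown_behind
  then show ?thesis
  proof cases
    case (1 u a pl v r' r)
    then show ?thesis using assms(2,3) unfolding e_def
      by (auto elim!: duplicator_moveE
          simp: duplicator_translate_def d2a_move_def frown_behind.simps challenge_behind.simps
          intro: gmove.intros shadows.intros)
  qed
next
  case challenge_behind
  then show ?thesis using assms(2) by cases simp
qed

definition shadow_next :: "('s, 'a) strategy \<Rightarrow> ('s, 'a) conf list \<Rightarrow> ('s, 'a) conf \<Rightarrow> ('s, 'a) conf \<Rightarrow> ('s, 'a) conf" where
  "shadow_next \<sigma> hs c' n' = (if owner c' = Duplicator then \<sigma> hs else spoiler_shadow c' (last hs) n')"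

primrec shadow_history :: "('s, 'a) strategy \<Rightarrow> (nat \<Rightarrow> ('s, 'a) conf) \<Rightarrow> nat \<Rightarrow> ('s, 'a) conf list" where
  "shadow_history \<sigma> f 0 = [f 0]"
| "shadow_history \<sigma> f (Suc i) =
     shadow_history \<sigma> f i @ [shadow_next \<sigma> (shadow_history \<sigma> f i) (f i) (f (Suc i))]"

definition shadow :: "('s, 'a) strategy \<Rightarrow> (nat \<Rightarrow> ('s, 'a) conf) \<Rightarrow> nat \<Rightarrow> ('s, 'a) conf" where
  "shadow \<sigma> f i = last (shadow_history \<sigma> f i)"

lemma shadow_0 [simp]: "shadow \<sigma> f 0 = f 0"
  by (simp add: shadow_def)

lemma shadow_Suc: "shadow \<sigma> f (Suc i) = shadow_next \<sigma> (shadow_history \<sigma> f i) (f i) (f (Suc i))"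
  by (simp add: shadow_def)

lemma shadow_history_Suc: "shadow_history \<sigma> f (Suc i) = shadow_history \<sigma> f i @ [shadow \<sigma> f (Suc i)]"
  by (simp add: shadow_def)

lemma shadow_history_eq_map: "shadow_history \<sigma> f i = map (shadow \<sigma> f) [0..<Suc i]"
  by (induction i) (simp_all add: shadow_history_Suc del: shadow_history.simps(2))

lemma shadow_history_cong: "(\<And>j. j \<le> i \<Longrightarrow> f j = g j) \<Longrightarrow> shadow_history \<sigma> f i = shadow_history \<sigma> g i"
  by (induction i) simp_all

text \<open>The fallback moves only matter on histories that are not plays of this strategy; they make it
  legal and eager on all histories.\<close>

definition eager_strategy :: "'a \<Rightarrow> ('s \<Rightarrow> 'a \<Rightarrow> 's \<Rightarrow> bool) \<Rightarrow> ('s, 'a) strategy \<Rightarrow> ('s, 'a) strategy" where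
  "eager_strategy tau step \<sigma> h =
    (let hs = shadow_history \<sigma> ((!) h) (length h - 1);
         d = duplicator_translate tau step (last h) (last hs) (\<sigma> hs)
     in if eager_move tau step (last h) d then d
        else if \<exists>e. eager_move tau step (last h) e then SOME e. eager_move tau step (last h) e
        else last h)"

lemma eager_strategy_move:
  "eager_move tau step (last h) (eager_strategy tau step \<sigma> h) \<or>
   (\<nexists>e. eager_move tau step (last h) e) \<and> eager_strategy tau step \<sigma> h = last h"
  unfolding eager_strategy_def Let_def by (auto intro: someI_ex)

lemma eager_strategy_legal: "legal_strategy tau step (eager_strategy tau step \<sigma>)"
  unfolding legal_strategy_def
proof (intro allI impI)
  fix h
  assume "h \<noteq> [] \<and> owner (last h) = Duplicator \<and> (\<exists>c'. gmove tau step (last h) c')"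
  then obtain c' where "gmove tau step (last h) c'" by blast
  then have "\<exists>e. eager_move tau step (last h) e" by (rule exists_eager_move)
  then show "gmove tau step (last h) (eager_strategy tau step \<sigma> h)"
    using eager_strategy_move[of tau step h \<sigma>] unfolding eager_move_def by blast
qed

lemma eager_strategy_eager: "eager step (eager_strategy tau step \<sigma>)"
  unfolding eager_def
proof (intro allI impI)
  fix h
  show "\<not> d2a_move step (last h) (eager_strategy tau step \<sigma> h)"
    using eager_strategy_move[of tau step h \<sigma>] no_d2a_move_refl[of step "last h"]
    unfolding eager_move_def by auto
qed

lemma eager_strategy_translates:
  assumes "eager_move tau step (f i)
    (duplicator_translate tau step (f i) (shadow \<sigma> f i) (\<sigma> (shadow_history \<sigma> f i)))"
  shows "eager_strategy tau step \<sigma> (map f [0..<Suc i]) =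
    duplicator_translate tau step (f i) (shadow \<sigma> f i) (\<sigma> (shadow_history \<sigma> f i))"
proof -
  have "shadow_history \<sigma> ((!) (map f [0..<Suc i])) i = shadow_history \<sigma> f i"
    by (rule shadow_history_cong) (simp del: upt_Suc)
  then show ?thesis
    using assms unfolding eager_strategy_def by (simp add: shadow_def Let_def del: upt_Suc)
qed

definition reward_link ::
    "('s \<Rightarrow> 'a \<Rightarrow> 's \<Rightarrow> bool) \<Rightarrow> (nat \<Rightarrow> ('s, 'a) conf) \<Rightarrow> (nat \<Rightarrow> ('s, 'a) conf) \<Rightarrow> nat \<Rightarrow> bool" where
  "reward_link step f g j \<longleftrightarrow>
     (rew (g (Suc j)) = Check \<longrightarrow> rew (f (Suc j)) = Check \<or> rew (f j) = Check \<or>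
        frown_behind step (f j) (g j) \<and> challenge_behind step (f (Suc j)) (g (Suc j))) \<and>
     (frown_behind step (f (Suc j)) (g (Suc j)) \<longrightarrow> frown_behind step (f j) (g j) \<or> rew (f j) = Check)"

lemma shadow_play_step:
  assumes win: "winning_strategy tau step \<sigma> (f 0)"
    and play: "consistent_upto tau step (eager_strategy tau step \<sigma>) f (Suc i)"
    and rel: "shadows step (f i) (shadow \<sigma> f i)"
    and shadow_play: "consistent_upto tau step \<sigma> (shadow \<sigma> f) i"
  shows "consistent_upto tau step \<sigma> (shadow \<sigma> f) (Suc i) \<and>
    shadows step (f (Suc i)) (shadow \<sigma> f (Suc i)) \<and> reward_link step f (shadow \<sigma> f) i"
proof -
  let ?g = "shadow \<sigma> f"
  have move: "gmove tau step (f i) (f (Suc i))"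
    and follows: "owner (f i) = Duplicator \<Longrightarrow> f (Suc i) = eager_strategy tau step \<sigma> (map f [0..<Suc i])"
    using play by (simp_all add: consistent_upto_Suc del: upt_Suc)
  show ?thesis
  proof (cases "owner (f i)")
    case Spoiler
    then have "?g (Suc i) = spoiler_shadow (f i) (?g i) (f (Suc i))"
      by (simp add: shadow_Suc shadow_next_def shadow_def)
    with shadow_spoiler_move[OF rel Spoiler move] shadow_play shadows_owner[OF rel] Spoiler
    show ?thesis by (auto simp: consistent_upto_Suc reward_link_def simp del: upt_Suc)
  next
    case Duplicator
    let ?hs = "shadow_history \<sigma> f i"
    have owner_g: "owner (?g i) = Duplicator" using shadows_owner[OF rel] Duplicator by simp
    have "\<exists>c. gmove tau step (?g i) c"
      using winning_strategy_not_stuck[of tau step \<sigma> ?g i] win shadow_play owner_g by simp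
    moreover have "legal_strategy tau step \<sigma>" using win unfolding winning_strategy_def by blast
    moreover have "?hs \<noteq> []" and "last ?hs = ?g i"
      by (simp_all add: shadow_history_eq_map del: upt_Suc)
    ultimately have shadow_move: "gmove tau step (?g i) (\<sigma> ?hs)"
      using owner_g unfolding legal_strategy_def by metis
    have g_Suc: "?g (Suc i) = \<sigma> ?hs"
      using Duplicator by (simp add: shadow_Suc shadow_next_def)
    note translated = shadow_duplicator_move[OF rel owner_g shadow_move]
    then have "f (Suc i) = duplicator_translate tau step (f i) (?g i) (\<sigma> ?hs)"
      using follows[OF Duplicator] eager_strategy_translates[of tau step f i \<sigma>]
      unfolding eager_move_def by simp
    with translated shadow_play shadow_move g_Suc owner_g show ?thesis
      by (simp add: consistent_upto_Suc reward_link_def shadow_history_eq_map del: upt_Suc)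
  qed
qed

lemma shadow_play_invariant:
  assumes win: "winning_strategy tau step \<sigma> (f 0)"
    and play: "consistent_upto tau step (eager_strategy tau step \<sigma>) f n"
  shows "i \<le> n \<Longrightarrow> consistent_upto tau step \<sigma> (shadow \<sigma> f) i \<and>
    shadows step (f i) (shadow \<sigma> f i) \<and> (\<forall>j<i. reward_link step f (shadow \<sigma> f) j)"
proof (induction i)
  case 0
  then show ?case by (simp add: consistent_upto_def shadows_refl)
next
  case (Suc i)
  then have "consistent_upto tau step (eager_strategy tau step \<sigma>) f (Suc i)"
    using consistent_upto_mono[OF play] by blast
  with Suc shadow_play_step[where f = f, OF win] show ?case by (auto simp: less_Suc_eq)
qed

lemma eager_strategy_fin_play_ends_Spoiler:
  assumes win: "winning_strategy tau step \<sigma> c0"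
    and fin: "fin_play tau step (eager_strategy tau step \<sigma>) c0 p"
  shows "owner (last p) = Spoiler"
proof -
  define n where "n = length p - 1"
  have p_eq: "p = map ((!) p) [0..<Suc n]" and p0: "p ! 0 = c0"
    using fin unfolding fin_play_def n_def by (auto simp: map_nth hd_conv_nth)
  then have "fin_play tau step (eager_strategy tau step \<sigma>) (p ! 0) (map ((!) p) [0..<Suc n])"
    using fin by simp
  then have play: "consistent_upto tau step (eager_strategy tau step \<sigma>) ((!) p) n"
    and stuck: "\<nexists>c. gmove tau step (p ! n) c"
    by (simp_all add: fin_play_iff_consistent_upto del: upt_Suc)
  let ?g = "shadow \<sigma> ((!) p)"
  have shadow_play: "consistent_upto tau step \<sigma> ?g n" and rel: "shadows step (p ! n) (?g n)"
    using shadow_play_invariant[OF win[folded p0] play order.refl] by simp_all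
  show ?thesis
  proof (rule ccontr)
    assume "owner (last p) \<noteq> Spoiler"
    then have "owner (p ! n) = Duplicator"
      using p_eq by (metis last_map_upt_Suc player.exhaust)
    then have owner_g: "owner (?g n) = Duplicator"
      using shadows_owner[OF rel] by simp
    moreover have "winning_strategy tau step \<sigma> (?g 0)"
      using win p0 by simp
    ultimately obtain d where "gmove tau step (?g n) d"
      using winning_strategy_not_stuck[OF _ shadow_play] by blast
    then have "gmove tau step (p ! n) (duplicator_translate tau step (p ! n) (?g n) d)"
      using shadow_duplicator_move[OF rel owner_g] by blast
    with stuck show False by blast
  qed
qed

lemma eager_strategy_inf_play_infinitely_Check:
  assumes win: "winning_strategy tau step \<sigma> c0"
    and "inf_play tau step (eager_strategy tau step \<sigma>) c0 \<rho>"
  shows "\<exists>\<^sub>\<infinity>i. rew (\<rho> i) = Check"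
proof -
  from assms(2) have \<rho>0: "\<rho> 0 = c0" and play: "\<And>n. consistent_upto tau step (eager_strategy tau step \<sigma>) \<rho> n"
    by (simp_all add: inf_play_iff_consistent_upto)
  note invariant = shadow_play_invariant[OF win[folded \<rho>0] play order.refl]
  have "inf_play tau step \<sigma> c0 (shadow \<sigma> \<rho>)"
    using \<rho>0 invariant by (simp add: inf_play_iff_consistent_upto)
  then have "\<exists>\<^sub>\<infinity>i. rew (shadow \<sigma> \<rho> i) = Check"
    using win unfolding winning_strategy_def by blast
  then show ?thesis
  proof (rule infinitely_often_transfer)
    fix j
    have "reward_link step \<rho> (shadow \<sigma> \<rho>) j" using invariant[of "Suc j"] by blast
    then show "rew (shadow \<sigma> \<rho> (Suc j)) = Check \<Longrightarrow> rew (\<rho> (Suc j)) = Check \<or> rew (\<rho> j) = Check \<or>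
        frown_behind step (\<rho> j) (shadow \<sigma> \<rho> j) \<and> challenge_behind step (\<rho> (Suc j)) (shadow \<sigma> \<rho> (Suc j))"
      and "frown_behind step (\<rho> (Suc j)) (shadow \<sigma> \<rho> (Suc j)) \<Longrightarrow>
        frown_behind step (\<rho> j) (shadow \<sigma> \<rho> j) \<or> rew (\<rho> j) = Check"
      unfolding reward_link_def by blast+
  qed (rule not_frown_and_challenge_behind)
qed

theorem eager_strategy_winning:
  assumes "winning_strategy tau step \<sigma> c0"
  shows "winning_strategy tau step (eager_strategy tau step \<sigma>) c0"
  unfolding winning_strategy_def
  by (intro conjI allI impI eager_strategy_legal eager_strategy_fin_play_ends_Spoiler[OF assms]
      eager_strategy_inf_play_infinitely_Check[OF assms])

theorem lemma5p12:
  fixes tau :: 'a and step :: "'s \<Rightarrow> 'a \<Rightarrow> 's \<Rightarrow> bool" and s t :: 's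
  assumes "dup_wins tau step (Conf Spoiler (s, t) None None Star)"
  shows "\<exists>\<sigma>. winning_strategy tau step \<sigma> (Conf Spoiler (s, t) None None Star) \<and> eager step \<sigma>"
proof -
  obtain \<sigma> where "winning_strategy tau step \<sigma> (Conf Spoiler (s, t) None None Star)"
    using assms unfolding dup_wins_def by blast
  then have "winning_strategy tau step (eager_strategy tau step \<sigma>) (Conf Spoiler (s, t) None None Star)"
    by (rule eager_strategy_winning)
  then show ?thesis
    using eager_strategy_eager[of step tau \<sigma>] by blast
qed

end
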